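(* Let $k$ be a positive integer and let $G$ be a graph that is not $(k+1)$-connected and has minimum degree at least $\frac{3k-1}{2}$. Then: (1) If $(S,K)\in P_0(G)$ and $(S',K')\in P(G)$ are distinct, then $K\subseteq K'$ or $(K\cup S)\cap(K'\cup S')=S\cap S'$. (2) If $(S,K),(S',K')\in P_0(G)$ are distinct, then $(K\cup S)\cap(K'\cup S')=S\cap S'$. (3) A pair $(S,K)\in P(G)$ lies in $P_0(G)$ if and only if there is no separator $S'$ of $G$ of minimum cardinality with $S'\cap K\ne\emptyset$.
   Context: Graphs are finite, simple, undirected. A graph is $k$-connected if it has more than $k$ vertices and removing any fewer than $k$ vertices leaves it connected. A separator of $G$ is a set $S\subseteq V(G)$ such that $G-S$ is disconnected. $P(G)$ is the set of pairs $(S,K)$ where $S$ is a separator of $G$ of minimum cardinality and $K\subseteq V(G)\setminus S$ is the vertex set of a connected component of $G-S$; it is partially ordered by $(S,K)\le(S',K')$ iff $K\subseteq K'$, and $P_0(G)$ denotes the set of minimal elements of $P(G)$. *)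

theory Defs
  imports Complex_Main
begin

definition graph :: "'a set \<Rightarrow> ('a \<Rightarrow> 'a \<Rightarrow> bool) \<Rightarrow> bool" where
  "graph V E \<longleftrightarrow> finite V \<and> (\<forall>x y. E x y \<longrightarrow> x \<in> V \<and> y \<in> V)
     \<and> (\<forall>x y. E x y \<longrightarrow> E y x) \<and> (\<forall>x. \<not> E x x)"

definition reach :: "('a \<Rightarrow> 'a \<Rightarrow> bool) \<Rightarrow> 'a set \<Rightarrow> 'a \<Rightarrow> 'a \<Rightarrow> bool" where
  "reach E W u v \<longleftrightarrow> u \<in> W \<and> v \<in> W \<and> (\<lambda>x y. x \<in> W \<and> y \<in> W \<and> E x y)\<^sup>*\<^sup>* u v"

definition connected_on :: "('a \<Rightarrow> 'a \<Rightarrow> bool) \<Rightarrow> 'a set \<Rightarrow> bool" where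
  "connected_on E W \<longleftrightarrow> (\<forall>u\<in>W. \<forall>v\<in>W. reach E W u v)"

definition degree :: "'a set \<Rightarrow> ('a \<Rightarrow> 'a \<Rightarrow> bool) \<Rightarrow> 'a \<Rightarrow> nat" where
  "degree V E v = card {u \<in> V. E v u}"

definition k_connected :: "'a set \<Rightarrow> ('a \<Rightarrow> 'a \<Rightarrow> bool) \<Rightarrow> nat \<Rightarrow> bool" where
  "k_connected V E k \<longleftrightarrow> card V > k \<and>
     (\<forall>X. X \<subseteq> V \<and> card X < k \<longrightarrow> connected_on E (V - X))"

definition separator :: "'a set \<Rightarrow> ('a \<Rightarrow> 'a \<Rightarrow> bool) \<Rightarrow> 'a set \<Rightarrow> bool" where
  "separator V E S \<longleftrightarrow> S \<subseteq> V \<and> \<not> connected_on E (V - S)"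

definition min_separator :: "'a set \<Rightarrow> ('a \<Rightarrow> 'a \<Rightarrow> bool) \<Rightarrow> 'a set \<Rightarrow> bool" where
  "min_separator V E S \<longleftrightarrow> separator V E S \<and> (\<forall>T. separator V E T \<longrightarrow> card S \<le> card T)"

definition component :: "('a \<Rightarrow> 'a \<Rightarrow> bool) \<Rightarrow> 'a set \<Rightarrow> 'a set \<Rightarrow> bool" where
  "component E W K \<longleftrightarrow> (\<exists>u\<in>W. K = {v. reach E W u v})"

definition P :: "'a set \<Rightarrow> ('a \<Rightarrow> 'a \<Rightarrow> bool) \<Rightarrow> ('a set \<times> 'a set) set" where
  "P V E = {(S, K). min_separator V E S \<and> component E (V - S) K}"

definition P0 :: "'a set \<Rightarrow> ('a \<Rightarrow> 'a \<Rightarrow> bool) \<Rightarrow> ('a set \<times> 'a set) set" where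
  "P0 V E = {(S, K). (S, K) \<in> P V E \<and>
     (\<forall>S' K'. (S', K') \<in> P V E \<and> K' \<subseteq> K \<longrightarrow> (S', K') = (S, K))}"

end

theory Submission
  imports Defs
begin

(* Let (S, K) be in P0, (S', K') in P, and let L, L' be the remaining vertices of G - S and
   G - S'. Each corner X \<inter> X' with X \<in> {K, L}, X' \<in> {K', L'} is cut off by
   (X \<inter> S') \<union> (S \<inter> S') \<union> (S \<inter> X'); the sizes of these boundaries for opposite
   corners add up to 2|S|, and a nonempty corner has boundary of size at least |S|.
   The degree bound makes every side of a minimum separator larger than half of it, so
   no side fits into another minimum separator, and minimality of K in P makes the
   boundary of a proper nonempty corner of K larger than |S|. Counting then shows that
   K meets K' only if K \<subseteq> K', and that otherwise K lies in L' with S \<inter> K' empty.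
   For (3): a minimum separator meeting K would cut across K; conversely, if none does,
   every K' \<subseteq> K from P is the component containing all of K, and S is its neighbourhood. *)


(* X is a union of components of G - T. *)
definition side_of :: "'a set \<Rightarrow> ('a \<Rightarrow> 'a \<Rightarrow> bool) \<Rightarrow> 'a set \<Rightarrow> 'a set \<Rightarrow> bool" where
  "side_of V E T X \<longleftrightarrow> X \<subseteq> V - T \<and> (\<forall>x\<in>X. \<forall>y. E x y \<longrightarrow> y \<in> X \<union> T)"

lemma reach_refl: "u \<in> W \<Longrightarrow> reach E W u u"
  unfolding reach_def by simp

lemma reach_edge: "x \<in> W \<Longrightarrow> y \<in> W \<Longrightarrow> E x y \<Longrightarrow> reach E W x y"
  unfolding reach_def by (simp add: r_into_rtranclp)

lemma reach_trans: "reach E W u v \<Longrightarrow> reach E W v w \<Longrightarrow> reach E W u w"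
  unfolding reach_def by (meson rtranclp_trans)

lemma reach_sym:
  assumes "graph V E" and "reach E W u v"
  shows "reach E W v u"
proof -
  have "symp (\<lambda>x y. x \<in> W \<and> y \<in> W \<and> E x y)"
    using assms(1) unfolding graph_def symp_def by blast
  then have "symp (\<lambda>x y. x \<in> W \<and> y \<in> W \<and> E x y)\<^sup>*\<^sup>*"
    by (rule symp_rtranclp)
  then show ?thesis
    using assms(2) unfolding reach_def by (auto dest: sympD)
qed

lemma reach_mono:
  assumes "reach E W u v" and "W \<subseteq> W'"
  shows "reach E W' u v"
proof -
  have "(\<lambda>x y. x \<in> W \<and> y \<in> W \<and> E x y) \<le> (\<lambda>x y. x \<in> W' \<and> y \<in> W' \<and> E x y)"
    using assms(2) by auto
  then show ?thesis
    using assms rtranclp_mono unfolding reach_def by blast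
qed

lemma reach_in_side:
  assumes "side_of V E T X" and "reach E (V - T) u v" and "u \<in> X"
  shows "reach E X u v"
proof -
  let ?R = "\<lambda>W x y. x \<in> W \<and> y \<in> W \<and> E x y"
  have "(?R (V - T))\<^sup>*\<^sup>* u v" using assms(2) unfolding reach_def by blast
  then have "(?R X)\<^sup>*\<^sup>* u v \<and> v \<in> X"
  proof (induction rule: rtranclp_induct)
    case base
    then show ?case using assms(3) by simp
  next
    case (step y z)
    then have "z \<in> X" using assms(1) unfolding side_of_def by blast
    with step have "?R X y z" by blast
    with step \<open>z \<in> X\<close> show ?case by (blast intro: rtranclp.rtrancl_into_rtrancl)
  qed
  then show ?thesis using assms(3) unfolding reach_def by blast
qed

lemma reach_side_mem: "side_of V E T X \<Longrightarrow> reach E (V - T) u v \<Longrightarrow> u \<in> X \<Longrightarrow> v \<in> X"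
  using reach_in_side reach_def by metis

lemma component_of_vertex:
  assumes "u \<in> W"
  shows "component E W {v. reach E W u v}" and "u \<in> {v. reach E W u v}"
  using assms reach_refl unfolding component_def by auto

lemma component_reach:
  assumes "graph V E" and "component E W K" and "v \<in> K" and "w \<in> K"
  shows "reach E W v w"
proof -
  obtain u where "K = {v. reach E W u v}" using assms(2) unfolding component_def by blast
  then have "reach E W v u" and "reach E W u w"
    using assms(1,3,4) reach_sym by auto
  then show ?thesis by (rule reach_trans)
qed

lemma component_side:
  assumes "graph V E" and "component E (V - T) K"
  shows "side_of V E T K" and "K \<noteq> {}"
proof -
  obtain u where u: "u \<in> V - T" and K: "K = {v. reach E (V - T) u v}"
    using assms(2) unfolding component_def by blast
  show "K \<noteq> {}" using K reach_refl[OF u] by auto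
  have "y \<in> K \<union> T" if "x \<in> K" and "E x y" for x y
  proof -
    have ux: "reach E (V - T) u x" using K \<open>x \<in> K\<close> by simp
    have "y \<in> V" using assms(1) \<open>E x y\<close> unfolding graph_def by blast
    moreover have "x \<in> V - T" using ux by (simp add: reach_def)
    ultimately have "reach E (V - T) u y" if "y \<notin> T"
      using ux \<open>E x y\<close> that by (blast intro: reach_trans reach_edge)
    then show ?thesis using K by auto
  qed
  moreover have "K \<subseteq> V - T" using K by (auto simp: reach_def)
  ultimately show "side_of V E T K" unfolding side_of_def by blast
qed

lemma side_complement:
  assumes "graph V E" and "side_of V E T X"
  shows "side_of V E T (V - T - X)"
  using assms unfolding side_of_def graph_def by blast

lemma separator_of_side:
  assumes "side_of V E T X" and "X \<noteq> {}" and "V - T - X \<noteq> {}" and "T \<subseteq> V"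
  shows "separator V E T"
proof -
  obtain u w where u: "u \<in> X" and w: "w \<in> V - T - X" using assms(2,3) by blast
  then have "\<not> reach E (V - T) u w" using assms(1) reach_side_mem by fastforce
  moreover have "u \<in> V - T" using u assms(1) unfolding side_of_def by blast
  ultimately show ?thesis
    using w assms(4) unfolding separator_def connected_on_def by blast
qed

lemma P_min_separator: "(S, K) \<in> P V E \<Longrightarrow> min_separator V E S"
  unfolding P_def by blast

lemma min_separator_subset: "min_separator V E S \<Longrightarrow> S \<subseteq> V"
  unfolding min_separator_def separator_def by blast

lemma min_separator_card_eq:
  "min_separator V E S \<Longrightarrow> min_separator V E S' \<Longrightarrow> card S' = card S"
  unfolding min_separator_def by (simp add: le_antisym)

lemma min_separator_card_le:
  "min_separator V E S \<Longrightarrow> separator V E T \<Longrightarrow> card S \<le> card T"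
  unfolding min_separator_def by blast

lemma P_sides:
  assumes "graph V E" and "(S, K) \<in> P V E"
  shows "side_of V E S K" and "K \<noteq> {}"
    and "side_of V E S (V - S - K)" and "V - S - K \<noteq> {}"
proof -
  have comp: "component E (V - S) K" and ms: "min_separator V E S"
    using assms(2) unfolding P_def by auto
  show side: "side_of V E S K" and "K \<noteq> {}" using component_side[OF assms(1) comp] by auto
  show "side_of V E S (V - S - K)" using side_complement[OF assms(1) side] .
  show "V - S - K \<noteq> {}"
  proof
    assume "V - S - K = {}"
    then have "V - S \<subseteq> K" by blast
    then have "connected_on E (V - S)"
      unfolding connected_on_def using component_reach[OF assms(1) comp] by (meson subsetD)
    then show False using ms unfolding min_separator_def separator_def by blast
  qed
qed

lemma card_split_by_P:
  assumes "graph V E" and "(S, K) \<in> P V E" and "T \<subseteq> V"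
  shows "card T = card (T \<inter> K) + card (T \<inter> S) + card (T \<inter> (V - S - K))"
proof -
  have fin: "finite T" using assms(1,3) finite_subset unfolding graph_def by blast
  have "K \<inter> S = {}" using P_sides(1)[OF assms(1,2)] unfolding side_of_def by blast
  then have "card ((T \<inter> K) \<union> (T \<inter> S)) = card (T \<inter> K) + card (T \<inter> S)"
    using fin by (intro card_Un_disjoint) auto
  moreover have "card ((T \<inter> K) \<union> (T \<inter> S) \<union> (T \<inter> (V - S - K)))
      = card ((T \<inter> K) \<union> (T \<inter> S)) + card (T \<inter> (V - S - K))"
    using fin by (intro card_Un_disjoint) auto
  moreover have "(T \<inter> K) \<union> (T \<inter> S) \<union> (T \<inter> (V - S - K)) = T" using assms(3) by blast
  ultimately show ?thesis by simp
qed

definition corner_boundary :: "'a set \<Rightarrow> 'a set \<Rightarrow> 'a set \<Rightarrow> 'a set \<Rightarrow> 'a set" where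
  "corner_boundary S X S' X' = (X \<inter> S') \<union> (S \<inter> S') \<union> (S \<inter> X')"

lemma side_corner:
  "side_of V E S X \<Longrightarrow> side_of V E S' X' \<Longrightarrow> side_of V E (corner_boundary S X S' X') (X \<inter> X')"
  unfolding side_of_def corner_boundary_def by blast

lemma card_corner_boundary_le:
  "card (corner_boundary S X S' X') \<le> card (X \<inter> S') + card (S \<inter> S') + card (S \<inter> X')"
  unfolding corner_boundary_def by (meson add_right_mono card_Un_le le_trans)

lemma separator_corner_boundary:
  assumes "side_of V E S X" and "side_of V E S' X'" and "X \<inter> X' \<noteq> {}" and "V - S - X \<noteq> {}"
    and "S \<subseteq> V" and "S' \<subseteq> V"
  shows "separator V E (corner_boundary S X S' X')"
proof (rule separator_of_side[OF side_corner[OF assms(1,2)] assms(3)])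
  show "V - corner_boundary S X S' X' - X \<inter> X' \<noteq> {}"
    using assms(4) unfolding corner_boundary_def by blast
  show "corner_boundary S X S' X' \<subseteq> V"
    using assms(1,5,6) unfolding corner_boundary_def side_of_def by blast
qed

lemma corner_card_ge:
  assumes "min_separator V E S" and "side_of V E S X" and "side_of V E S' X'"
    and "X \<inter> X' \<noteq> {}" and "V - S - X \<noteq> {}" and "S' \<subseteq> V"
  shows "card S \<le> card (X \<inter> S') + card (S \<inter> S') + card (S \<inter> X')"
proof -
  have "separator V E (corner_boundary S X S' X')"
    using separator_corner_boundary assms min_separator_subset by blast
  then show ?thesis
    using assms(1) min_separator_card_le card_corner_boundary_le le_trans by blast
qed

lemma P0_side_eq:
  assumes "graph V E" and "(S, K) \<in> P0 V E" and "side_of V E A C" and "C \<subseteq> K" and "C \<noteq> {}"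
    and "A \<subseteq> V" and "V - A - C \<noteq> {}" and "card A \<le> card S"
  shows "C = K"
proof -
  have SK: "(S, K) \<in> P V E"
    and minimal: "\<And>S' K'. (S', K') \<in> P V E \<Longrightarrow> K' \<subseteq> K \<Longrightarrow> (S', K') = (S, K)"
    using assms(2) unfolding P0_def by auto
  have "separator V E A" using separator_of_side assms(3,5,6,7) by blast
  moreover have "card A \<le> card T" if "separator V E T" for T
    using min_separator_card_le[OF P_min_separator[OF SK] that] assms(8) by linarith
  ultimately have ms: "min_separator V E A" unfolding min_separator_def by blast
  obtain u where u: "u \<in> C" using assms(5) by blast
  then have "u \<in> V - A" using assms(3) unfolding side_of_def by blast
  define D where "D = {v. reach E (V - A) u v}"
  have "component E (V - A) D" unfolding D_def by (rule component_of_vertex(1)[OF \<open>u \<in> V - A\<close>])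
  then have AD: "(A, D) \<in> P V E" using ms unfolding P_def by simp
  have DC: "D \<subseteq> C" unfolding D_def using reach_side_mem[OF assms(3) _ u] by auto
  then have "(A, D) = (S, K)" using minimal[OF AD] assms(4) by auto
  then show ?thesis using DC assms(4) by auto
qed

lemma P0_corner_card_gt:
  assumes "graph V E" and "(S, K) \<in> P0 V E" and "side_of V E S' X'" and "S' \<subseteq> V"
    and "K \<inter> X' \<noteq> {}" and "\<not> K \<subseteq> X'"
  shows "card S < card (K \<inter> S') + card (S \<inter> S') + card (S \<inter> X')"
proof (rule ccontr)
  assume "\<not> ?thesis"
  then have card_le: "card (corner_boundary S K S' X') \<le> card S"
    using card_corner_boundary_le le_trans not_less by blast
  have SK: "(S, K) \<in> P V E" using assms(2) unfolding P0_def by blast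
  note sides = P_sides[OF assms(1) SK]
  have "S \<subseteq> V" using min_separator_subset P_min_separator SK by blast
  then have "corner_boundary S K S' X' \<subseteq> V"
    using sides(1) assms(4) unfolding corner_boundary_def side_of_def by blast
  moreover have "V - corner_boundary S K S' X' - K \<inter> X' \<noteq> {}"
    using sides(4) unfolding corner_boundary_def by blast
  ultimately have "K \<inter> X' = K"
    using P0_side_eq[OF assms(1,2) side_corner[OF sides(1) assms(3)] _ assms(5)] card_le by blast
  then show False using assms(6) by blast
qed

(* The hypotheses \<delta>(G) \<ge> (3k - 1)/2 and \<kappa>(G) \<le> k, cleared of fractions. *)
locale min_degree_graph =
  fixes V :: "'a set" and E :: "'a \<Rightarrow> 'a \<Rightarrow> bool" and k :: nat
  assumes graph: "graph V E"
    and min_degree: "v \<in> V \<Longrightarrow> 3 * k \<le> 2 * degree V E v + 1"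
    and min_separator_card: "min_separator V E T \<Longrightarrow> card T \<le> k"
begin

lemma side_card_ge:
  assumes "side_of V E T X" and "X \<noteq> {}" and "T \<subseteq> V" and "card T \<le> k"
  shows "card T + 1 \<le> 2 * card X"
proof -
  have fin: "finite V" using graph unfolding graph_def by blast
  obtain x where x: "x \<in> X" using assms(2) by blast
  have XV: "X \<subseteq> V" using assms(1) unfolding side_of_def by blast
  have "{u \<in> V. E x u} \<subseteq> (X - {x}) \<union> T"
    using assms(1) x graph unfolding side_of_def graph_def by blast
  then have "degree V E x \<le> card ((X - {x}) \<union> T)"
    unfolding degree_def using fin XV assms(3) by (intro card_mono) (auto intro: finite_subset)
  also have "\<dots> \<le> card X - 1 + card T"
    using card_Un_le[of "X - {x}" T] x by simp
  finally have "degree V E x \<le> card X - 1 + card T" .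
  moreover have "card X \<ge> 1"
    using x XV fin by (metis One_nat_def Suc_leI card_gt_0_iff empty_iff finite_subset)
  moreover have "3 * k \<le> 2 * degree V E x + 1" using min_degree x XV by blast
  ultimately show ?thesis using assms(4) by linarith
qed

lemma side_within_card:
  assumes "min_separator V E S" and "side_of V E S X" and "X \<noteq> {}" and "X \<subseteq> Y"
  shows "card S + 1 \<le> 2 * card (X \<inter> Y)"
  using side_card_ge[OF assms(2,3) min_separator_subset[OF assms(1)] min_separator_card[OF assms(1)]]
    assms(4) by (simp add: Int_absorb2)

end

locale crossing_separations = min_degree_graph +
  fixes S K S' K' :: "'a set"
  assumes SK: "(S, K) \<in> P V E" and SK': "(S', K') \<in> P V E"
begin

abbreviation "L \<equiv> V - S - K"
abbreviation "L' \<equiv> V - S' - K'"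

lemma min_separators: "min_separator V E S" "min_separator V E S'"
  using P_min_separator SK SK' by blast+

lemma separators_subset: "S \<subseteq> V" "S' \<subseteq> V"
  using min_separator_subset min_separators by blast+

lemma card_S_split: "card S = card (S \<inter> K') + card (S \<inter> S') + card (S \<inter> L')"
  using card_split_by_P[OF graph SK' separators_subset(1)] .

lemma card_S'_split: "card S = card (K \<inter> S') + card (S \<inter> S') + card (L \<inter> S')"
  using card_split_by_P[OF graph SK separators_subset(2)]
    min_separator_card_eq[OF min_separators] by (simp add: Int_commute)

lemma corner_card_ge_crossing:
  assumes "X \<in> {K, L}" and "X' \<in> {K', L'}" and "X \<inter> X' \<noteq> {}"
  shows "card S \<le> card (X \<inter> S') + card (S \<inter> S') + card (S \<inter> X')"
proof (rule corner_card_ge[OF min_separators(1) _ _ assms(3) _ separators_subset(2)])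
  show "side_of V E S X" "side_of V E S' X'"
    using assms(1,2) P_sides[OF graph SK] P_sides[OF graph SK'] by auto
  show "V - S - X \<noteq> {}"
    using assms(1) P_sides[OF graph SK] unfolding side_of_def by auto
qed

lemma side_inside_card:
  assumes "X \<in> {K, L}" and "X \<inter> K' = {}" and "X \<inter> L' = {}"
  shows "card S + 1 \<le> 2 * card (X \<inter> S')"
proof (rule side_within_card[OF min_separators(1)])
  show side: "side_of V E S X" and "X \<noteq> {}" using assms(1) P_sides[OF graph SK] by auto
  show "X \<subseteq> S'" using side assms(2,3) unfolding side_of_def by blast
qed

lemma side'_inside_card:
  assumes "X' \<in> {K', L'}" and "K \<inter> X' = {}" and "L \<inter> X' = {}"
  shows "card S + 1 \<le> 2 * card (S \<inter> X')"
proof -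
  have "card S' + 1 \<le> 2 * card (X' \<inter> S)"
  proof (rule side_within_card[OF min_separators(2)])
    show side: "side_of V E S' X'" and "X' \<noteq> {}" using assms(1) P_sides[OF graph SK'] by auto
    show "X' \<subseteq> S" using side assms(2,3) unfolding side_of_def by blast
  qed
  then show ?thesis using min_separator_card_eq[OF min_separators] by (simp add: Int_commute)
qed

lemma P0_meet:
  assumes P0: "(S, K) \<in> P0 V E" and meet: "K \<inter> K' \<noteq> {}"
  shows "K \<subseteq> K'"
proof (rule ccontr)
  assume not_sub: "\<not> K \<subseteq> K'"
  have sides': "side_of V E S' K'" "side_of V E S' L'" using P_sides[OF graph SK'] by auto
  have KK': "card S < card (K \<inter> S') + card (S \<inter> S') + card (S \<inter> K')"
    using P0_corner_card_gt[OF graph P0 sides'(1) separators_subset(2) meet not_sub] .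
  have KL': "card S < card (K \<inter> S') + card (S \<inter> S') + card (S \<inter> L')" if "K \<inter> L' \<noteq> {}"
    using P0_corner_card_gt[OF graph P0 sides'(2) separators_subset(2) that] meet by blast
  have LK': "card S \<le> card (L \<inter> S') + card (S \<inter> S') + card (S \<inter> K')" if "L \<inter> K' \<noteq> {}"
    using corner_card_ge_crossing[of L K'] that by simp
  \<comment> \<open>opposite corners have boundaries of total size 2 card S\<close>
  have LL': "L \<inter> L' = {}"
  proof (rule ccontr)
    assume "L \<inter> L' \<noteq> {}"
    then have "card S \<le> card (L \<inter> S') + card (S \<inter> S') + card (S \<inter> L')"
      using corner_card_ge_crossing[of L L'] by simp
    then show False using KK' card_S_split card_S'_split by linarith
  qed
  have L_in: "card S + 1 \<le> 2 * card (L \<inter> S')" if "L \<inter> K' = {}"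
    using side_inside_card[of L] that LL' by simp
  have L'_in: "card S + 1 \<le> 2 * card (S \<inter> L')" if "K \<inter> L' = {}"
    using side'_inside_card[of L'] that LL' by simp
  show False
    using KK' KL' LK' L_in L'_in card_S_split card_S'_split
    by (cases "K \<inter> L' = {}"; cases "L \<inter> K' = {}") auto
qed

lemma side_not_subset_separator: "\<not> K \<subseteq> S'"
proof
  assume "K \<subseteq> S'"
  moreover have "K' \<inter> S' = {}" using P_sides(1)[OF graph SK'] unfolding side_of_def by blast
  ultimately have KK': "K \<inter> K' = {}" and KL': "K \<inter> L' = {}" by blast+
  then have K_in: "card S + 1 \<le> 2 * card (K \<inter> S')"
    using side_inside_card[of K] by simp
  have LK': "card S \<le> card (L \<inter> S') + card (S \<inter> S') + card (S \<inter> K')" if "L \<inter> K' \<noteq> {}"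
    using corner_card_ge_crossing[of L K'] that by simp
  have LL': "card S \<le> card (L \<inter> S') + card (S \<inter> S') + card (S \<inter> L')" if "L \<inter> L' \<noteq> {}"
    using corner_card_ge_crossing[of L L'] that by simp
  have L_in: "card S + 1 \<le> 2 * card (L \<inter> S')" if "L \<inter> K' = {}" "L \<inter> L' = {}"
    using side_inside_card[of L] that by simp
  have K'_in: "card S + 1 \<le> 2 * card (S \<inter> K')" if "L \<inter> K' = {}"
    using side'_inside_card[of K'] that KK' by simp
  have L'_in: "card S + 1 \<le> 2 * card (S \<inter> L')" if "L \<inter> L' = {}"
    using side'_inside_card[of L'] that KL' by simp
  show False
    using K_in LK' LL' L_in K'_in L'_in card_S_split card_S'_split
    by (cases "L \<inter> K' = {}"; cases "L \<inter> L' = {}") auto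
qed

lemma crossing_eq_if_side_subset_side:
  assumes "K \<subseteq> L'"
  shows "(K \<union> S) \<inter> (K' \<union> S') = S \<inter> S'"
proof -
  have KS': "K \<inter> S' = {}" using assms by blast
  have "K \<inter> L' \<noteq> {}" using assms P_sides[OF graph SK] by blast
  then have "card S \<le> card (S \<inter> S') + card (S \<inter> L')"
    using corner_card_ge_crossing[of K L'] KS' by simp
  then have "card (S \<inter> K') = 0" using card_S_split by linarith
  moreover have "finite (S \<inter> K')"
    using graph separators_subset(1) finite_subset unfolding graph_def by blast
  ultimately have "S \<inter> K' = {}" by simp
  moreover have "K \<inter> K' = {}" using assms by blast
  ultimately show ?thesis using KS' by blast
qed

end

context min_degree_graph
begin

lemma P0_subset_if_meet:
  assumes "(S, K) \<in> P0 V E" and "(S', K') \<in> P V E" and "K \<inter> K' \<noteq> {}"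
  shows "K \<subseteq> K'"
proof -
  interpret crossing_separations V E k S K S' K'
    using assms(1,2) by unfold_locales (auto simp: P0_def)
  show ?thesis using P0_meet assms(1,3) .
qed

lemma P0_crossing:
  assumes P0: "(S, K) \<in> P0 V E" and SK': "(S', K') \<in> P V E"
  shows "K \<subseteq> K' \<or> (K \<union> S) \<inter> (K' \<union> S') = S \<inter> S'"
proof (cases "K \<inter> K' = {}")
  case False
  then show ?thesis using P0_subset_if_meet[OF P0 SK'] by blast
next
  case True
  interpret crossing_separations V E k S K S' K'
    using P0 SK' by unfold_locales (auto simp: P0_def)
  obtain u where "u \<in> K" "u \<notin> S'" using side_not_subset_separator by blast
  moreover have "K \<subseteq> V - S" using P_sides(1)[OF graph SK] unfolding side_of_def by simp
  ultimately have u: "u \<in> K" "u \<in> L'" using True by auto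
  define M where "M = {v. reach E (V - S') u v}"
  have "u \<in> V - S'" using u(2) by blast
  then have "component E (V - S') M" "u \<in> M"
    unfolding M_def by (rule component_of_vertex)+
  then have "(S', M) \<in> P V E" using min_separators(2) unfolding P_def by simp
  then have "K \<subseteq> M" using P0_subset_if_meet[OF P0] u(1) \<open>u \<in> M\<close> by blast
  moreover have "M \<subseteq> L'"
    unfolding M_def using reach_side_mem[OF P_sides(3)[OF graph SK'] _ u(2)] by auto
  ultimately show ?thesis using crossing_eq_if_side_subset_side by auto
qed

lemma P0_min_separator_disjoint:
  assumes P0: "(S, K) \<in> P0 V E" and ms: "min_separator V E S'"
  shows "S' \<inter> K = {}"
proof -
  obtain u where u: "u \<in> V - S'"
    using ms unfolding min_separator_def separator_def connected_on_def by blast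
  define M where "M = {v. reach E (V - S') u v}"
  have "component E (V - S') M" unfolding M_def by (rule component_of_vertex(1)[OF u])
  then have SM: "(S', M) \<in> P V E" using ms unfolding P_def by simp
  have "(S, K) \<in> P V E" using P0 unfolding P0_def by simp
  then have "S \<inter> K = {}" "S' \<inter> M = {}"
    using P_sides(1)[OF graph] SM unfolding side_of_def by blast+
  then show ?thesis using P0_crossing[OF P0 SM] by blast
qed

lemma P0_pair_crossing:
  assumes P0: "(S, K) \<in> P0 V E" "(S', K') \<in> P0 V E" and ne: "(S, K) \<noteq> (S', K')"
  shows "(K \<union> S) \<inter> (K' \<union> S') = S \<inter> S'"
proof -
  have "(S, K) \<in> P V E" "(S', K') \<in> P V E"
    and minimal': "\<And>T C. (T, C) \<in> P V E \<Longrightarrow> C \<subseteq> K' \<Longrightarrow> (T, C) = (S', K')"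
    using P0 unfolding P0_def by auto
  then have "\<not> K \<subseteq> K'" using ne by blast
  then show ?thesis using P0_crossing[OF P0(1) \<open>(S', K') \<in> P V E\<close>] by blast
qed

end

lemma min_separator_card_le_if_not_k_connected:
  assumes "graph V E" and "\<not> k_connected V E (k + 1)" and "min_separator V E S"
  shows "card S \<le> k"
proof (cases "card V > k + 1")
  case True
  then obtain X where "X \<subseteq> V" "card X < k + 1" "\<not> connected_on E (V - X)"
    using assms(2) unfolding k_connected_def by auto
  moreover from this have "card S \<le> card X"
    using min_separator_card_le[OF assms(3)] unfolding separator_def by blast
  ultimately show ?thesis by linarith
next
  case False
  obtain u v where uv: "u \<in> V - S" "v \<in> V - S" "\<not> reach E (V - S) u v"
    using assms(3) unfolding min_separator_def separator_def connected_on_def by blast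
  then have "u \<noteq> v" using reach_refl[of u "V - S" E] by auto
  have fin: "finite V" using assms(1) unfolding graph_def by blast
  have "card (S \<union> {u, v}) = card S + 2"
    using uv \<open>u \<noteq> v\<close> fin min_separator_subset[OF assms(3)] by (simp add: finite_subset)
  moreover have "card (S \<union> {u, v}) \<le> card V"
    using uv fin min_separator_subset[OF assms(3)] by (intro card_mono) auto
  ultimately show ?thesis using False by linarith
qed

lemma P_separator_eq_neighbourhood:
  assumes "graph V E" and "(S, K) \<in> P V E"
  shows "S = {y. \<exists>x\<in>K. E x y} - K"
proof -
  define N where "N = {y. \<exists>x\<in>K. E x y} - K"
  note sides = P_sides[OF assms]
  have ms: "min_separator V E S" using P_min_separator[OF assms(2)] .
  have NS: "N \<subseteq> S" using sides(1) unfolding N_def side_of_def by blast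
  have "side_of V E N K" using sides(1) unfolding side_of_def N_def by blast
  moreover have "V - N - K \<noteq> {}" using sides(4) NS by blast
  moreover have "N \<subseteq> V" using assms(1) unfolding N_def graph_def by blast
  ultimately have "separator V E N" using separator_of_side sides(2) by blast
  then have "card S \<le> card N" by (rule min_separator_card_le[OF ms])
  moreover have "finite S"
    using assms(1) min_separator_subset[OF ms] finite_subset unfolding graph_def by blast
  ultimately have "N = S" using NS card_seteq by blast
  then show ?thesis unfolding N_def by blast
qed

lemma P0_if_no_min_separator_meets:
  assumes "graph V E" and SK: "(S, K) \<in> P V E"
    and no_meet: "\<not> (\<exists>S'. min_separator V E S' \<and> S' \<inter> K \<noteq> {})"
  shows "(S, K) \<in> P0 V E"
proof -
  have "(S', K') = (S, K)" if SK': "(S', K') \<in> P V E" and "K' \<subseteq> K" for S' K'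
  proof -
    have comp: "component E (V - S) K" using SK unfolding P_def by simp
    have "S' \<inter> K = {}" using no_meet P_min_separator[OF SK'] by blast
    moreover have "K \<subseteq> V - S" using P_sides(1)[OF assms(1) SK] unfolding side_of_def by simp
    ultimately have K_sub: "K \<subseteq> V - S'" by blast
    obtain u where u: "u \<in> K'" using P_sides(2)[OF assms(1) SK'] by blast
    have "v \<in> K'" if "v \<in> K" for v
    proof -
      have "u \<in> K" using u \<open>K' \<subseteq> K\<close> by blast
      then have "reach E K u v"
        using reach_in_side[OF P_sides(1)[OF assms(1) SK]] component_reach[OF assms(1) comp _ that]
        by blast
      then have "reach E (V - S') u v" using K_sub by (rule reach_mono)
      then show "v \<in> K'" by (rule reach_side_mem[OF P_sides(1)[OF assms(1) SK'] _ u])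
    qed
    then have "K' = K" using \<open>K' \<subseteq> K\<close> by blast
    then show ?thesis
      using P_separator_eq_neighbourhood[OF assms(1) SK] P_separator_eq_neighbourhood[OF assms(1) SK']
      by simp
  qed
  then show ?thesis using SK unfolding P0_def by blast
qed

lemma (in min_degree_graph) P0_iff_no_min_separator_meets:
  assumes "(S, K) \<in> P V E"
  shows "(S, K) \<in> P0 V E \<longleftrightarrow> \<not> (\<exists>S'. min_separator V E S' \<and> S' \<inter> K \<noteq> {})"
  using P0_min_separator_disjoint[of S K] P0_if_no_min_separator_meets[OF graph assms] by blast

theorem lemma3:
  fixes V :: "'a set" and E :: "'a \<Rightarrow> 'a \<Rightarrow> bool" and k :: nat
  assumes "graph V E" and "k \<ge> 1"
    and "\<not> k_connected V E (k + 1)"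
    and "\<forall>v\<in>V. real (degree V E v) \<ge> (3 * real k - 1) / 2"
  shows "(\<forall>S K S' K'. (S, K) \<in> P0 V E \<and> (S', K') \<in> P V E \<and> (S, K) \<noteq> (S', K') \<longrightarrow>
            K \<subseteq> K' \<or> (K \<union> S) \<inter> (K' \<union> S') = S \<inter> S')
       \<and> (\<forall>S K S' K'. (S, K) \<in> P0 V E \<and> (S', K') \<in> P0 V E \<and> (S, K) \<noteq> (S', K') \<longrightarrow>
            (K \<union> S) \<inter> (K' \<union> S') = S \<inter> S')
       \<and> (\<forall>S K. (S, K) \<in> P V E \<longrightarrow>
            ((S, K) \<in> P0 V E \<longleftrightarrow> \<not> (\<exists>S'. min_separator V E S' \<and> S' \<inter> K \<noteq> {})))"
proof -
  have degree_bound: "3 * k \<le> 2 * degree V E v + 1" if "v \<in> V" for v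
  proof -
    have "real (3 * k) \<le> real (2 * degree V E v + 1)" using assms(4) that by auto
    then show ?thesis by (simp only: of_nat_le_iff)
  qed
  interpret min_degree_graph V E k
    by unfold_locales
      (fact assms(1), fact degree_bound, fact min_separator_card_le_if_not_k_connected[OF assms(1,3)])
  show ?thesis
  proof (intro conjI allI impI)
    fix S K S' K'
    assume "(S, K) \<in> P0 V E \<and> (S', K') \<in> P V E \<and> (S, K) \<noteq> (S', K')"
    then show "K \<subseteq> K' \<or> (K \<union> S) \<inter> (K' \<union> S') = S \<inter> S'" using P0_crossing by blast
  next
    fix S K S' K'
    assume "(S, K) \<in> P0 V E \<and> (S', K') \<in> P0 V E \<and> (S, K) \<noteq> (S', K')"
    then show "(K \<union> S) \<inter> (K' \<union> S') = S \<inter> S'" using P0_pair_crossing by blast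
  qed (rule P0_iff_no_min_separator_meets)
qed

end
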